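(* For positive integers $f,d$ with $f\mid d$, we have $R_q(d)\ge R_q(f)$.
   Context: Let $\mathbb{F}_q$ be a finite field. For a positive integer $d$, let $\mathbf{E}_d$ be the elliptic curve $y^2+xy=x^3-t^d$ over $\mathbb{F}_q(t)$ and $R_q(d)$ the rank of the Mordell–Weil group $\mathbf{E}_d(\mathbb{F}_q(t))$. *)

theory Defs
  imports "HOL-Computational_Algebra.Polynomial" "HOL-Computational_Algebra.Fraction_Field"
          "HOL-Library.Extended_Nat"
begin

datatype 'k ecpt = Inf | Pt 'k 'k

text \<open>General Weierstrass equation
  y^2 + a1 x y + a3 y = x^3 + a2 x^2 + a4 x + a6, coefficients given as a 5-tuple.\<close>
type_synonym 'k wcoeffs = "'k \<times> 'k \<times> 'k \<times> 'k \<times> 'k"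

definition on_curve :: "'k::field wcoeffs \<Rightarrow> 'k ecpt \<Rightarrow> bool" where
  "on_curve A P = (case A of (a1, a2, a3, a4, a6) \<Rightarrow>
     (case P of Inf \<Rightarrow> True
      | Pt x y \<Rightarrow> y^2 + a1*x*y + a3*y = x^3 + a2*x^2 + a4*x + a6))"

definition ec_points :: "'k::field wcoeffs \<Rightarrow> 'k ecpt set" where
  "ec_points A = {P. on_curve A P}"

definition ec_neg :: "'k::field wcoeffs \<Rightarrow> 'k ecpt \<Rightarrow> 'k ecpt" where
  "ec_neg A P = (case A of (a1, a2, a3, a4, a6) \<Rightarrow>
     (case P of Inf \<Rightarrow> Inf | Pt x y \<Rightarrow> Pt x (- y - a1*x - a3)))"

text \<open>Chord-and-tangent group law (Silverman, III.2.3), valid in every characteristic.\<close>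
definition ec_add :: "'k::field wcoeffs \<Rightarrow> 'k ecpt \<Rightarrow> 'k ecpt \<Rightarrow> 'k ecpt" where
  "ec_add A P Q = (case A of (a1, a2, a3, a4, a6) \<Rightarrow>
     (case P of Inf \<Rightarrow> Q
      | Pt x1 y1 \<Rightarrow> (case Q of Inf \<Rightarrow> P
        | Pt x2 y2 \<Rightarrow>
           (if x1 = x2 \<and> y1 + y2 + a1*x2 + a3 = 0 then Inf
            else
              let lam = (if x1 = x2
                         then (3*x1^2 + 2*a2*x1 + a4 - a1*y1) / (2*y1 + a1*x1 + a3)
                         else (y2 - y1) / (x2 - x1));
                  nu = (if x1 = x2
                        then (- (x1^3) + a4*x1 + 2*a6 - a3*y1) / (2*y1 + a1*x1 + a3)
                        else (y1*x2 - y2*x1) / (x2 - x1));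
                  x3 = lam^2 + a1*lam - a2 - x1 - x2;
                  y3 = - (lam + a1)*x3 - nu - a3
              in Pt x3 y3))))"

definition ec_mul :: "'k::field wcoeffs \<Rightarrow> int \<Rightarrow> 'k ecpt \<Rightarrow> 'k ecpt" where
  "ec_mul A n P = (if n \<ge> 0 then (ec_add A P ^^ nat n) Inf
                   else ec_neg A ((ec_add A P ^^ nat (- n)) Inf))"

definition ec_lincomb :: "'k::field wcoeffs \<Rightarrow> int list \<Rightarrow> 'k ecpt list \<Rightarrow> 'k ecpt" where
  "ec_lincomb A cs ps = foldr (\<lambda>(c, P) R. ec_add A (ec_mul A c P) R) (zip cs ps) Inf"

definition ec_independent :: "'k::field wcoeffs \<Rightarrow> 'k ecpt list \<Rightarrow> bool" where
  "ec_independent A ps = (distinct ps \<and> set ps \<subseteq> ec_points A \<and>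
     (\<forall>cs. length cs = length ps \<longrightarrow> ec_lincomb A cs ps = Inf \<longrightarrow> (\<forall>c\<in>set cs. c = 0)))"

text \<open>Mordell-Weil rank: maximal size of a Z-independent family of rational points
  (as an extended natural number, so no finiteness is presupposed).\<close>
definition mw_rank :: "'k::field wcoeffs \<Rightarrow> enat" where
  "mw_rank A = (SUP ps \<in> {ps. ec_independent A ps}. enat (length ps))"

definition tvar :: "'a::field poly fract" where
  "tvar = Fract [:0, 1:] 1"

text \<open>E_d : y^2 + x y = x^3 - t^d, i.e. a1 = 1, a2 = a3 = a4 = 0, a6 = - t^d.\<close>
definition E_coeffs :: "nat \<Rightarrow> 'a::field poly fract wcoeffs" where
  "E_coeffs d = (1, 0, 0, 0, - (tvar ^ d))"

text \<open>R_q(d) for the finite field given by the type 'a.\<close>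
definition R :: "'a::{field,finite} itself \<Rightarrow> nat \<Rightarrow> enat" where
  "R _ d = mw_rank (E_coeffs d :: 'a poly fract wcoeffs)"

end

theory Submission
  imports Defs
begin

text \<open>An embedding of fields \<open>h : K \<rightarrow> L\<close> maps \<open>K\<close>-rational points of a Weierstrass
  curve injectively to \<open>L\<close>-rational points of the transported curve and commutes with the
  group law, since the chord-and-tangent formulas are rational expressions in the coordinates
  and coefficients. Hence independent families stay independent and the rank can only grow.
  For \<open>d = f m\<close> the substitution \<open>t \<mapsto> t\<^sup>m\<close> is such an embedding of \<open>\<bbbF>\<^sub>q(t)\<close> into
  itself, and it transports \<open>E\<^sub>f\<close> to \<open>E\<^sub>d\<close>.\<close>

locale field_hom =
  fixes h :: "'k::field \<Rightarrow> 'l::field"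
  assumes hom_add: "h (x + y) = h x + h y"
    and hom_mult: "h (x * y) = h x * h y"
    and hom_one: "h 1 = 1"
begin

lemma hom_zero: "h 0 = 0"
  using hom_add[of 0 0] by (metis add_left_cancel add.right_neutral)

lemma hom_uminus: "h (- x) = - h x"
  using hom_add[of x "- x"] by (metis hom_zero add.right_inverse minus_unique)

lemma hom_diff: "h (x - y) = h x - h y"
  using hom_add[of x "- y"] by (simp add: hom_uminus)

lemma hom_power: "h (x ^ n) = h x ^ n"
  by (induction n) (simp_all add: hom_one hom_mult)

lemma hom_of_nat: "h (of_nat n) = of_nat n"
  by (induction n) (simp_all add: hom_zero hom_one hom_add)

lemma hom_numeral: "h (numeral n) = numeral n"
  using hom_of_nat[of "numeral n"] by simp

lemma hom_inverse: "h (inverse x) = inverse (h x)"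
proof (cases "x = 0")
  case False
  then have "h x * h (inverse x) = 1"
    by (simp flip: hom_mult add: hom_one)
  then show ?thesis
    by (simp add: inverse_unique)
qed (simp add: hom_zero)

lemma hom_divide: "h (x / y) = h x / h y"
  by (simp add: divide_inverse hom_mult hom_inverse)

text \<open>A ring homomorphism between fields has trivial kernel, so it is automatically injective.\<close>
lemma hom_eq_iff: "h x = h y \<longleftrightarrow> x = y"
proof
  assume "h x = h y"
  then have "h (x - y) = 0"
    by (simp add: hom_diff)
  then have "h ((x - y) * inverse (x - y)) = 0"
    by (simp add: hom_mult)
  then show "x = y"
    by (cases "x = y") (simp_all add: hom_one)
qed simp

lemma hom_eq_0_iff: "h x = 0 \<longleftrightarrow> x = 0"
  using hom_eq_iff[of x 0] by (simp add: hom_zero)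

lemmas hom_fold = hom_add[symmetric] hom_mult[symmetric] hom_uminus[symmetric] hom_diff[symmetric]
  hom_divide[symmetric] hom_power[symmetric] hom_eq_iff hom_eq_0_iff

lemma numeral_mult_hom: "numeral n * h x = h (numeral n * x)"
  by (simp add: hom_mult hom_numeral)

definition map_wcoeffs :: "'k wcoeffs \<Rightarrow> 'l wcoeffs" where
  "map_wcoeffs A = (case A of (a1, a2, a3, a4, a6) \<Rightarrow> (h a1, h a2, h a3, h a4, h a6))"

lemma map_ecpt_eq_iff: "map_ecpt h P = map_ecpt h Q \<longleftrightarrow> P = Q"
  by (cases P; cases Q) (simp_all add: hom_eq_iff)

lemma on_curve_map_iff: "on_curve (map_wcoeffs A) (map_ecpt h P) \<longleftrightarrow> on_curve A P"
  by (cases A; cases P) (simp_all add: on_curve_def map_wcoeffs_def hom_fold numeral_mult_hom)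

lemma ec_neg_map: "ec_neg (map_wcoeffs A) (map_ecpt h P) = map_ecpt h (ec_neg A P)"
  by (cases A; cases P) (simp_all add: ec_neg_def map_wcoeffs_def hom_fold numeral_mult_hom)

lemma ec_add_map:
  "ec_add (map_wcoeffs A) (map_ecpt h P) (map_ecpt h Q) = map_ecpt h (ec_add A P Q)"
proof (cases A; cases P; cases Q)
  fix a1 a2 a3 a4 a6 x1 y1 x2 y2
  assume "A = (a1, a2, a3, a4, a6)" "P = Pt x1 y1" "Q = Pt x2 y2"
  then show ?thesis
    by (simp only: ec_add_def map_wcoeffs_def prod.case ecpt.map ecpt.case Let_def)
      (simp only: hom_fold numeral_mult_hom if_distrib[of h, symmetric],
        simp only: if_distrib[of "map_ecpt h"] ecpt.map)
qed (simp_all add: ec_add_def map_wcoeffs_def)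

lemma ec_mul_map: "ec_mul (map_wcoeffs A) c (map_ecpt h P) = map_ecpt h (ec_mul A c P)"
proof -
  have "(ec_add (map_wcoeffs A) (map_ecpt h P) ^^ n) Inf = map_ecpt h ((ec_add A P ^^ n) Inf)" for n
    by (induction n) (simp_all flip: ec_add_map)
  then show ?thesis
    by (simp add: ec_mul_def ec_neg_map)
qed

lemma ec_lincomb_map:
  "ec_lincomb (map_wcoeffs A) cs (map (map_ecpt h) ps) = map_ecpt h (ec_lincomb A cs ps)"
proof (induction ps arbitrary: cs)
  case (Cons p ps)
  then show ?case
    by (cases cs) (simp_all add: ec_lincomb_def ec_mul_map flip: ec_add_map)
qed (simp add: ec_lincomb_def)

lemma ec_independent_map:
  assumes "ec_independent A ps"
  shows "ec_independent (map_wcoeffs A) (map (map_ecpt h) ps)"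
proof -
  have "inj (map_ecpt h)"
    by (rule injI) (simp add: map_ecpt_eq_iff)
  moreover have "ec_lincomb (map_wcoeffs A) cs (map (map_ecpt h) ps) = Inf \<longleftrightarrow>
      ec_lincomb A cs ps = Inf" for cs
    using map_ecpt_eq_iff[of _ Inf] by (simp add: ec_lincomb_map)
  ultimately show ?thesis
    using assms
    by (auto simp: ec_independent_def ec_points_def on_curve_map_iff distinct_map inj_on_def)
qed

lemma mw_rank_le_map: "mw_rank A \<le> mw_rank (map_wcoeffs A)"
  unfolding mw_rank_def
proof (rule SUP_least)
  fix ps
  assume "ps \<in> {ps. ec_independent A ps}"
  then have "map (map_ecpt h) ps \<in> {ps. ec_independent (map_wcoeffs A) ps}"
    by (simp add: ec_independent_map)
  from SUP_upper[OF this, of "\<lambda>ps. enat (length ps)"]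
  show "enat (length ps) \<le> (SUP ps \<in> {ps. ec_independent (map_wcoeffs A) ps}. enat (length ps))"
    by simp
qed

end

text \<open>The substitution \<open>t \<mapsto> q(t)\<close>, with junk value \<open>0\<close> for constant \<open>q\<close>, where
  denominators could vanish.\<close>
lift_definition fract_pcompose :: "'a::field poly fract \<Rightarrow> 'a poly \<Rightarrow> 'a poly fract"
  is "\<lambda>x q. if degree q = 0 then (0, 1) else (pcompose (fst x) q, pcompose (snd x) q)"
  by (auto simp: pcompose_eq_0_iff simp flip: pcompose_mult)

lemma fract_pcompose_Fract:
  assumes "0 < degree q"
  shows "fract_pcompose (Fract a b) q = Fract (pcompose a q) (pcompose b q)"
  using assms by transfer (auto simp: pcompose_eq_0_iff)

lemma field_hom_fract_pcompose:
  assumes "0 < degree q"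
  shows "field_hom (\<lambda>x. fract_pcompose x q)"
proof
  fix x y :: "'a poly fract"
  show "fract_pcompose (x + y) q = fract_pcompose x q + fract_pcompose y q"
    by (induction x, induction y)
      (simp add: assms fract_pcompose_Fract pcompose_eq_0_iff pcompose_add pcompose_mult)
  show "fract_pcompose (x * y) q = fract_pcompose x q * fract_pcompose y q"
    by (induction x, induction y)
      (simp add: assms fract_pcompose_Fract pcompose_eq_0_iff pcompose_mult)
  show "fract_pcompose 1 q = 1"
    by (simp add: assms One_fract_def fract_pcompose_Fract pcompose_1)
qed

lemma tvar_power: "(tvar :: 'a::field poly fract) ^ n = Fract (monom 1 n) 1"
  by (induction n) (simp_all add: tvar_def One_fract_def monom_altdef pCons_one)

lemma fract_pcompose_tvar: "0 < degree q \<Longrightarrow> fract_pcompose tvar q = Fract q 1"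
  by (simp add: tvar_def fract_pcompose_Fract pcompose_pCons pcompose_1)

lemma mw_rank_E_coeffs_le_mult:
  assumes "0 < m"
  shows "mw_rank (E_coeffs f :: 'a::field poly fract wcoeffs)
    \<le> mw_rank (E_coeffs (f * m) :: 'a poly fract wcoeffs)"
proof -
  define q :: "'a poly" where "q = monom 1 m"
  have q: "0 < degree q"
    using assms by (simp add: q_def degree_monom_eq)
  interpret field_hom "\<lambda>x. fract_pcompose x q"
    by (rule field_hom_fract_pcompose[OF q])
  have "fract_pcompose tvar q = Fract q 1"
    by (rule fract_pcompose_tvar[OF q])
  also have "\<dots> = tvar ^ m"
    by (simp add: tvar_power q_def)
  finally have "fract_pcompose tvar q = tvar ^ m" .
  then have "map_wcoeffs (E_coeffs f) = E_coeffs (f * m)"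
    by (simp add: map_wcoeffs_def E_coeffs_def hom_one hom_zero hom_uminus hom_power
        mult.commute flip: power_mult)
  then show ?thesis
    using mw_rank_le_map[of "E_coeffs f"] by simp
qed

theorem lemma6:
  fixes f d :: nat
  assumes "0 < f" and "0 < d" and "f dvd d"
  shows "R TYPE('a::{field,finite}) d \<ge> R TYPE('a) f"
proof -
  obtain m where d: "d = f * m"
    using assms(3) by blast
  with assms(2) have "0 < m"
    by simp
  then show ?thesis
    unfolding R_def d by (rule mw_rank_E_coeffs_le_mult)
qed

end
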